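(* Let $\Delta$ be a finite set with $|\Delta|\ge2$, $\ell\ge2$, $\Omega=\Delta^\ell$, $W=\mathrm{Sym}\,\Delta\wr S_\ell$ in product action on $\Omega$, $G\le W$, and let $M$ be a minimal normal subgroup of $G$ transitive on $\Omega$, $M=T_1\times\cdots\times T_k$ with the $T_i$ isomorphic finite simple groups. Let $\Gamma$ be a connected graph with vertex set $\Omega$ with $G\le\mathrm{Aut}\,\Gamma$. Assume $\Gamma$ is $M$-arc-transitive, that $G\pi$ is transitive on $\{1,\dots,\ell\}$, and that $G\le G^{(1)}\wr(G\pi)$. Let $\alpha=(\alpha_1,\dots,\alpha_1)\in\Omega$, $\beta=(\beta_1,\dots,\beta_\ell)\in\Gamma(\alpha)$, and $K=G^{(1)}$. Then there is $h\in(K_{\alpha_1})^\ell$ with $\beta h=(\beta_1,\dots,\beta_1)$. Thus in the image graph $\Gamma h$ the tuples $(\alpha_1,\dots,\alpha_1)$ and $(\beta_1,\dots,\beta_1)$ are adjacent. Furthermore $G^h\le\mathrm{Aut}(\Gamma h)$ and $G^h\le G^{(1)}\wr(G\pi)$.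
   Context: Product action: $(\delta_1,\dots,\delta_\ell)^{(g_1,\dots,g_\ell)h}=(\delta_{1h^{-1}}g_{1h^{-1}},\dots,\delta_{\ell h^{-1}}g_{\ell h^{-1}})$. $\pi:W\to S_\ell$ is the natural projection. For $j$, $W_j$ is the stabiliser of $j$ under $\pi$, $W_j=\mathrm{Sym}\,\Delta\times(\mathrm{Sym}\,\Delta\wr S_{\ell-1})$ with the first factor on the $j$-th coordinate, and the component $G^{(j)}\le\mathrm{Sym}\,\Delta$ is the projection of $G\cap W_j$ onto the first factor. $G^{(1)}\wr(G\pi)$ denotes the subgroup $(G^{(1)})^\ell\rtimes G\pi$ of $W$. $K_{\alpha_1}$ is the stabiliser of $\alpha_1$ in $K$; $(K_{\alpha_1})^\ell\le(\mathrm{Sym}\,\Delta)^\ell$ acts coordinatewise. $\Gamma h$ is the graph on $\Omega$ whose edges are $\{xh,yh\}$ for edges $\{x,y\}$ of $\Gamma$. $\Gamma$ is $M$-arc-transitive if $M$ is transitive on ordered pairs of adjacent vertices; $\Gamma(\alpha)$ is the neighbourhood of $\alpha$. *)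

theory Defs
  imports "HOL-Algebra.Algebra"
begin

text \<open>Points of Omega are tuples indexed by {..<l} (coordinate 0 plays the role of coordinate 1).\<close>

definition Omega :: "nat \<Rightarrow> 'a set \<Rightarrow> (nat \<Rightarrow> 'a) set" where
  "Omega l D = PiE {..<l} (\<lambda>_. D)"

text \<open>The element (g_1,...,g_l)h of W acting on Omega:
  (delta^{(g)h})_i = delta_{i h^{-1}} g_{i h^{-1}}; permutations act as functions.\<close>

definition wr_elt :: "nat \<Rightarrow> 'a set \<Rightarrow> (nat \<Rightarrow> 'a \<Rightarrow> 'a) \<Rightarrow> (nat \<Rightarrow> nat)
    \<Rightarrow> (nat \<Rightarrow> 'a) \<Rightarrow> (nat \<Rightarrow> 'a)" where
  "wr_elt l D gs h = (\<lambda>x \<in> Omega l D. (\<lambda>i \<in> {..<l}.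
      gs (inv_into {..<l} h i) (x (inv_into {..<l} h i))))"

definition Wr :: "nat \<Rightarrow> 'a set \<Rightarrow> ((nat \<Rightarrow> 'a) \<Rightarrow> (nat \<Rightarrow> 'a)) set" where
  "Wr l D = {wr_elt l D gs h | gs h.
      gs \<in> PiE {..<l} (\<lambda>_. carrier (BijGroup D)) \<and> h \<in> carrier (BijGroup {..<l})}"

text \<open>The natural projection pi : W \<rightarrow> S_l (well defined since |Delta| \<ge> 2).\<close>

definition wr_pi :: "nat \<Rightarrow> 'a set \<Rightarrow> ((nat \<Rightarrow> 'a) \<Rightarrow> (nat \<Rightarrow> 'a)) \<Rightarrow> (nat \<Rightarrow> nat)" where
  "wr_pi l D w = (THE h. h \<in> carrier (BijGroup {..<l}) \<and>
      (\<exists>gs \<in> PiE {..<l} (\<lambda>_. carrier (BijGroup D)). w = wr_elt l D gs h))"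

text \<open>The component G^(j): projection onto the j-th factor of G \<inter> W_j.\<close>

definition component :: "nat \<Rightarrow> 'a set \<Rightarrow> ((nat \<Rightarrow> 'a) \<Rightarrow> (nat \<Rightarrow> 'a)) set \<Rightarrow> nat
    \<Rightarrow> ('a \<Rightarrow> 'a) set" where
  "component l D G j = {gs j | gs h.
      gs \<in> PiE {..<l} (\<lambda>_. carrier (BijGroup D)) \<and> h \<in> carrier (BijGroup {..<l})
      \<and> h j = j \<and> wr_elt l D gs h \<in> G}"

definition wreath :: "nat \<Rightarrow> 'a set \<Rightarrow> ('a \<Rightarrow> 'a) set \<Rightarrow> (nat \<Rightarrow> nat) set
    \<Rightarrow> ((nat \<Rightarrow> 'a) \<Rightarrow> (nat \<Rightarrow> 'a)) set" where
  "wreath l D K P = {wr_elt l D gs h | gs h. gs \<in> PiE {..<l} (\<lambda>_. K) \<and> h \<in> P}"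

definition base_power :: "nat \<Rightarrow> 'a set \<Rightarrow> ('a \<Rightarrow> 'a) set
    \<Rightarrow> ((nat \<Rightarrow> 'a) \<Rightarrow> (nat \<Rightarrow> 'a)) set" where
  "base_power l D K = {wr_elt l D gs (\<lambda>i \<in> {..<l}. i) | gs. gs \<in> PiE {..<l} (\<lambda>_. K)}"

abbreviation subgrp :: "('b, 'c) monoid_scheme \<Rightarrow> 'b set \<Rightarrow> ('b, 'c) monoid_scheme" where
  "subgrp G H \<equiv> G\<lparr>carrier := H\<rparr>"

definition minimal_normal :: "('b, 'c) monoid_scheme \<Rightarrow> 'b set \<Rightarrow> bool" where
  "minimal_normal G M \<longleftrightarrow> M \<lhd> G \<and> M \<noteq> {\<one>\<^bsub>G\<^esub>} \<and>
     (\<forall>N. N \<lhd> G \<and> N \<subseteq> M \<longrightarrow> N = {\<one>\<^bsub>G\<^esub>} \<or> N = M)"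

definition ordered_prod :: "('b, 'c) monoid_scheme \<Rightarrow> nat \<Rightarrow> (nat \<Rightarrow> 'b) \<Rightarrow> 'b" where
  "ordered_prod G k t = foldr (\<lambda>i acc. t i \<otimes>\<^bsub>G\<^esub> acc) [0..<k] \<one>\<^bsub>G\<^esub>"

definition internal_direct_product ::
    "('b, 'c) monoid_scheme \<Rightarrow> 'b set \<Rightarrow> nat \<Rightarrow> (nat \<Rightarrow> 'b set) \<Rightarrow> bool" where
  "internal_direct_product G M k Ts \<longleftrightarrow> (\<forall>i<k. subgroup (Ts i) G \<and> Ts i \<subseteq> M) \<and>
     ordered_prod G k \<in> iso (product_group {..<k} (\<lambda>i. subgrp G (Ts i))) (subgrp G M)"

definition graph_on :: "'v set \<Rightarrow> ('v \<Rightarrow> 'v \<Rightarrow> bool) \<Rightarrow> bool" where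
  "graph_on V E \<longleftrightarrow> (\<forall>x y. E x y \<longrightarrow> x \<in> V \<and> y \<in> V \<and> x \<noteq> y \<and> E y x)"

definition connected_graph :: "'v set \<Rightarrow> ('v \<Rightarrow> 'v \<Rightarrow> bool) \<Rightarrow> bool" where
  "connected_graph V E \<longleftrightarrow> (\<forall>x\<in>V. \<forall>y\<in>V. E\<^sup>*\<^sup>* x y)"

definition graph_aut :: "'v set \<Rightarrow> ('v \<Rightarrow> 'v \<Rightarrow> bool) \<Rightarrow> ('v \<Rightarrow> 'v) set" where
  "graph_aut V E = {g \<in> carrier (BijGroup V). \<forall>x\<in>V. \<forall>y\<in>V. E x y \<longleftrightarrow> E (g x) (g y)}"

definition arc_transitive :: "('v \<Rightarrow> 'v \<Rightarrow> bool) \<Rightarrow> ('v \<Rightarrow> 'v) set \<Rightarrow> bool" where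
  "arc_transitive E M \<longleftrightarrow> (\<forall>x y u v. E x y \<and> E u v \<longrightarrow> (\<exists>m\<in>M. m x = u \<and> m y = v))"

definition image_graph :: "('v \<Rightarrow> 'v) \<Rightarrow> ('v \<Rightarrow> 'v \<Rightarrow> bool) \<Rightarrow> ('v \<Rightarrow> 'v \<Rightarrow> bool)" where
  "image_graph h E = (\<lambda>x y. \<exists>u v. E u v \<and> x = h u \<and> y = h v)"

text \<open>Conjugate G^h = h^{-1} G h (right actions), i.e. the maps x \<mapsto> h(g(h^{-1} x)).\<close>

definition conj_set :: "('b, 'c) monoid_scheme \<Rightarrow> 'b set \<Rightarrow> 'b \<Rightarrow> 'b set" where
  "conj_set S G h = {h \<otimes>\<^bsub>S\<^esub> g \<otimes>\<^bsub>S\<^esub> inv\<^bsub>S\<^esub> h | g. g \<in> G}"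

end

theory Submission
  imports Defs "HOL-Computational_Algebra.Primes"
begin

text \<open>
  The kernel of \<open>\<pi>\<close> meets the minimal normal subgroup \<open>M\<close> in \<open>1\<close> or in \<open>M\<close>. In the first case
  \<open>\<pi>\<close> embeds \<open>M\<close> into \<open>S\<^sub>l\<close>, so \<open>|M|\<close> divides \<open>l!\<close>; but \<open>|\<Delta>|\<^sup>l = |\<Omega>|\<close> divides \<open>|M|\<close> by
  transitivity, and no power \<open>d\<^sup>l\<close> with \<open>d \<ge> 2\<close> divides \<open>l!\<close>. So \<open>M \<le> ker \<pi>\<close>, and since
  \<open>G = M G\<^sub>\<alpha>\<close> every top permutation is realised in \<open>G\<^sub>\<alpha>\<close>.

  Given \<open>i\<close>, pick \<open>g \<in> G\<^sub>\<alpha>\<close> whose top sends \<open>i\<close> to the first coordinate. Then \<open>\<beta>g\<close> is a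
  neighbour of \<open>\<alpha>\<close>, so arc-transitivity gives \<open>m \<in> M\<^sub>\<alpha>\<close> with \<open>\<beta>m = \<beta>g\<close>. Writing
  \<open>g\<close> and \<open>m\<close> in \<open>K wr G\<pi>\<close> (the top of \<open>m\<close> is trivial) and comparing first coordinates
  of \<open>\<beta>g = \<beta>m\<close> yields \<open>k\<^sub>i \<in> K\<^bsub>\<alpha>\<^sub>1\<^esub>\<close> with \<open>\<beta>\<^sub>i k\<^sub>i = \<beta>\<^sub>1\<close>, and \<open>h = (k\<^sub>1, \<dots>, k\<^sub>l)\<close> works.
  Conjugating by \<open>h \<in> K\<^sup>l\<close> preserves \<open>K wr G\<pi>\<close>, and conjugating by any bijection \<open>h\<close>
  carries \<open>Aut \<Gamma>\<close> to \<open>Aut (\<Gamma>h)\<close>.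
\<close>

section \<open>Bijection groups\<close>

lemma carrier_BijGroup [simp]: "carrier (BijGroup S) = Bij S"
  by (simp add: BijGroup_def)

lemma one_BijGroup [simp]: "\<one>\<^bsub>BijGroup S\<^esub> = (\<lambda>x\<in>S. x)"
  by (simp add: BijGroup_def)

lemma Bij_apply_closed: "f \<in> Bij S \<Longrightarrow> x \<in> S \<Longrightarrow> f x \<in> S"
  using Bij_imp_funcset by blast

lemma Bij_image: "f \<in> Bij S \<Longrightarrow> f ` S = S"
  by (simp add: Bij_def bij_betw_def)

lemma Bij_inj_on: "f \<in> Bij S \<Longrightarrow> inj_on f S"
  by (simp add: Bij_def bij_betw_def)

lemma BijGroup_mult_closed: "f \<in> Bij S \<Longrightarrow> g \<in> Bij S \<Longrightarrow> f \<otimes>\<^bsub>BijGroup S\<^esub> g \<in> Bij S"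
  by (simp add: BijGroup_def compose_Bij)

lemma BijGroup_mult_apply:
  "f \<in> Bij S \<Longrightarrow> g \<in> Bij S \<Longrightarrow> x \<in> S \<Longrightarrow> (f \<otimes>\<^bsub>BijGroup S\<^esub> g) x = f (g x)"
  by (simp add: BijGroup_def compose_eq)

lemma BijGroup_inv_closed: "f \<in> Bij S \<Longrightarrow> inv\<^bsub>BijGroup S\<^esub> f \<in> Bij S"
  by (simp add: inv_BijGroup restrict_inv_into_Bij)

lemma BijGroup_inv_apply: "f \<in> Bij S \<Longrightarrow> x \<in> S \<Longrightarrow> (inv\<^bsub>BijGroup S\<^esub> f) (f x) = x"
  by (simp add: inv_BijGroup Bij_apply_closed Bij_inj_on)

lemma BijGroup_apply_inv: "f \<in> Bij S \<Longrightarrow> x \<in> S \<Longrightarrow> f ((inv\<^bsub>BijGroup S\<^esub> f) x) = x"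
  by (simp add: inv_BijGroup Bij_image f_inv_into_f)

lemma card_Bij:
  assumes "finite S"
  shows "card (Bij S) = fact (card S)"
proof -
  have "bij_betw (\<lambda>p. restrict p S) {p. p permutes S} (Bij S)"
  proof (rule bij_betw_byWitness[where f' = "\<lambda>f x. if x \<in> S then f x else x"])
    show "\<forall>p\<in>{p. p permutes S}. (\<lambda>x. if x \<in> S then restrict p S x else x) = p"
      by (auto simp: permutes_not_in)
    show "\<forall>f\<in>Bij S. restrict (\<lambda>x. if x \<in> S then f x else x) S = f"
      by (auto intro: extensionalityI[of _ S] simp: Bij_imp_extensional)
    show "(\<lambda>p. restrict p S) ` {p. p permutes S} \<subseteq> Bij S"
      by (auto simp: Bij_def permutes_imp_bij cong: bij_betw_cong)
    show "(\<lambda>f x. if x \<in> S then f x else x) ` Bij S \<subseteq> {p. p permutes S}"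
      by (auto simp: Bij_def intro!: bij_imp_permutes cong: bij_betw_cong)
  qed
  then show ?thesis
    using bij_betw_same_card card_permutations[OF refl assms] by metis
qed

lemma transitive_subgroup_card_dvd:
  assumes M: "subgroup M (BijGroup V)" and x: "x \<in> V" and trans: "\<forall>y\<in>V. \<exists>m\<in>M. m x = y"
  shows "card V dvd card M"
proof -
  let ?M = "subgrp (BijGroup V) M"
  have MB: "M \<subseteq> Bij V" using subgroup.subset[OF M] by simp
  have "(\<lambda>m. m) \<in> hom ?M (BijGroup V)"
    using MB by (intro homI) auto
  then have act: "group_action ?M V (\<lambda>m. m)"
    unfolding group_action_def
    by (intro group_hom.intro group_hom_axioms.intro group.subgroup_imp_group[OF group_BijGroup M]
        group_BijGroup)
  have "orbit ?M (\<lambda>m. m) x = V"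
  proof
    show "orbit ?M (\<lambda>m. m) x \<subseteq> V"
      using MB x by (auto simp: orbit_def Bij_apply_closed subsetD)
    show "V \<subseteq> orbit ?M (\<lambda>m. m) x"
      using trans by (auto simp: orbit_def)
  qed
  then have "card V * card (stabilizer ?M (\<lambda>m. m) x) = card M"
    using group_action.orbit_stabilizer_theorem[OF act x] by (simp add: order_def)
  then show ?thesis by (metis dvd_triv_left)
qed

lemma card_dvd_fact_of_inj_on_hom:
  assumes f: "group_hom H (BijGroup S) f" and M: "subgroup M H" and inj: "inj_on f M"
    and S: "finite S"
  shows "card M dvd fact (card S)"
proof -
  have "subgroup (f ` M) (BijGroup S)"
    using group_hom.subgroup_img_is_subgroup[OF f M] .
  then have "card (f ` M) dvd order (BijGroup S)"
    using group.lagrange[OF group_BijGroup] by (metis dvd_triv_right)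
  then show ?thesis
    using card_image[OF inj] card_Bij[OF S] by (simp add: order_def)
qed

lemma subgroup_stabiliser_transfer:
  assumes K: "subgroup K (BijGroup S)" and a: "a \<in> K" and b: "b \<in> K"
    and x: "x \<in> S" "a x = x" "b x = x" and y: "y \<in> S" and z: "z \<in> S" and eq: "a y = b z"
  shows "\<exists>k\<in>K. k x = x \<and> k z = y"
proof
  let ?k = "inv\<^bsub>BijGroup S\<^esub> a \<otimes>\<^bsub>BijGroup S\<^esub> b"
  have aB: "a \<in> Bij S" and bB: "b \<in> Bij S" using subgroup.subset[OF K] a b by auto
  have k_apply: "?k w = (inv\<^bsub>BijGroup S\<^esub> a) (b w)" if "w \<in> S" for w
    using BijGroup_mult_apply[OF BijGroup_inv_closed[OF aB] bB that] .
  have "(inv\<^bsub>BijGroup S\<^esub> a) x = x"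
    using BijGroup_inv_apply[OF aB x(1)] x(2) by simp
  moreover have "(inv\<^bsub>BijGroup S\<^esub> a) (b z) = y"
    using BijGroup_inv_apply[OF aB y] eq by simp
  ultimately show "?k x = x \<and> ?k z = y"
    using k_apply[OF x(1)] k_apply[OF z] x(3) by simp
  show "?k \<in> K"
    using subgroup.m_closed[OF K subgroup.m_inv_closed[OF K a] b] .
qed

section \<open>Powers dividing factorials\<close>

lemma fact_prime_split:
  fixes p n :: nat
  assumes p: "Factorial_Ring.prime p"
  shows "\<exists>c. fact n = p ^ (n div p) * fact (n div p) * c \<and> \<not> p dvd c"
proof (induction n)
  case 0
  show ?case using p by (intro exI[of _ 1]) (auto simp: prime_gt_1_nat)
next
  case (Suc n)
  then obtain c where c: "fact n = p ^ (n div p) * fact (n div p) * c" "\<not> p dvd c"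
    by blast
  show ?case
  proof (cases "p dvd Suc n")
    case True
    then have q: "Suc n div p = Suc (n div p)"
      by (simp add: div_Suc dvd_eq_mod_eq_0)
    have "fact (Suc n) = Suc n * (p ^ (n div p) * fact (n div p) * c)"
      using c(1) by simp
    also have "\<dots> = p ^ Suc (n div p) * (Suc (n div p) * fact (n div p)) * c"
      using True q by (metis dvd_mult_div_cancel mult.assoc mult.left_commute power_Suc)
    finally have "fact (Suc n) = p ^ (Suc n div p) * fact (Suc n div p) * c"
      using q by simp
    then show ?thesis using c(2) by blast
  next
    case False
    then have "Suc n div p = n div p"
      by (simp add: div_Suc dvd_eq_mod_eq_0)
    then have "fact (Suc n) = p ^ (Suc n div p) * fact (Suc n div p) * (Suc n * c)"
      using c(1) by (simp add: algebra_simps)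
    moreover have "\<not> p dvd Suc n * c"
      using False c(2) prime_dvd_mult_iff[OF p, of "Suc n" c] by blast
    ultimately show ?thesis by blast
  qed
qed

lemma multiplicity_prime_fact_less:
  fixes p n :: nat
  assumes p: "Factorial_Ring.prime p" and n: "n \<ge> 1"
  shows "multiplicity p (fact n) < n"
  using n
proof (induction n rule: less_induct)
  case (less n)
  obtain c where c: "fact n = p ^ (n div p) * fact (n div p) * c" "\<not> p dvd c"
    using fact_prime_split[OF p] by blast
  have "c \<noteq> 0" using c(2) by (metis dvd_0_right)
  then have eq: "multiplicity p (fact n) = n div p + multiplicity p (fact (n div p))"
    using p c by (simp add: prime_elem_multiplicity_mult_distrib prime_imp_prime_elem
        multiplicity_same_power not_dvd_imp_multiplicity_0)
  show ?case
  proof (cases "n div p = 0")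
    case True
    then show ?thesis using eq less.prems by simp
  next
    case False
    have p2: "p \<ge> 2" using prime_ge_2_nat[OF p] .
    then have "n div p < n" using less.prems by simp
    then have "multiplicity p (fact (n div p)) < n div p"
      using less.IH False by simp
    moreover have "p * (n div p) \<le> n"
      using div_times_less_eq_dividend[of n p] by (simp add: mult.commute)
    then have "2 * (n div p) \<le> n"
      using p2 by (meson le_trans mult_le_mono1)
    ultimately show ?thesis using eq by simp
  qed
qed

lemma power_not_dvd_fact:
  fixes d n :: nat
  assumes d: "d \<ge> 2" and n: "n \<ge> 1"
  shows "\<not> d ^ n dvd fact n"
proof
  assume dvd: "d ^ n dvd fact n"
  obtain p where p: "Factorial_Ring.prime p" "p dvd d"
    using prime_factor_nat[of d] d by auto
  have "p ^ n dvd fact n"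
    using dvd_trans[OF dvd_power_same[OF p(2)] dvd] .
  then have "n \<le> multiplicity p (fact n)"
    using p(1) by (intro multiplicity_geI) auto
  then show False
    using multiplicity_prime_fact_less[OF p(1) n] by simp
qed

section \<open>Elements of the wreath product\<close>

lemma Omega_coordinate: "x \<in> Omega l D \<Longrightarrow> j < l \<Longrightarrow> x j \<in> D"
  by (simp add: Omega_def PiE_iff)

lemma card_Omega: "card (Omega l D) = card D ^ l"
  by (simp add: Omega_def card_PiE)

lemma Bij_lessThan_preimage: "h \<in> Bij {..<l} \<Longrightarrow> i < l \<Longrightarrow> \<exists>j<l. h j = i"
  using Bij_image[of h "{..<l}"] by (metis imageE lessThan_iff)

lemma wr_elt_apply:
  assumes x: "x \<in> Omega l D" and h: "h \<in> Bij {..<l}" and j: "j < l"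
  shows "wr_elt l D gs h x (h j) = gs j (x j)"
  using x Bij_apply_closed[OF h] Bij_inj_on[OF h] j by (simp add: wr_elt_def inv_into_f_f)

lemma wr_elt_eqI:
  assumes x: "x \<in> Omega l D" and h: "h \<in> Bij {..<l}"
    and y: "y \<in> extensional {..<l}" "\<And>j. j < l \<Longrightarrow> y (h j) = gs j (x j)"
  shows "wr_elt l D gs h x = y"
proof (rule extensionalityI[of _ "{..<l}"])
  fix i assume "i \<in> {..<l}"
  then obtain j where j: "j < l" "h j = i" using Bij_lessThan_preimage[OF h] by auto
  then show "wr_elt l D gs h x i = y i" using wr_elt_apply[OF x h j(1)] y(2)[OF j(1)] by simp
qed (use x y in \<open>simp_all add: wr_elt_def\<close>)

lemma wr_elt_in_Omega:
  assumes x: "x \<in> Omega l D" and gs: "gs \<in> PiE {..<l} (\<lambda>_. Bij D)" and h: "h \<in> Bij {..<l}"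
  shows "wr_elt l D gs h x \<in> Omega l D"
proof -
  have "wr_elt l D gs h x i \<in> D" if i: "i < l" for i
  proof -
    obtain j where j: "j < l" "h j = i" using Bij_lessThan_preimage[OF h i] by blast
    then have "gs j \<in> Bij D" using gs by auto
    then show ?thesis
      using j wr_elt_apply[OF x h j(1)] Bij_apply_closed Omega_coordinate[OF x j(1)] by metis
  qed
  then show ?thesis using x by (simp add: Omega_def wr_elt_def)
qed

lemma wr_elt_inj_on:
  assumes gs: "gs \<in> PiE {..<l} (\<lambda>_. Bij D)" and h: "h \<in> Bij {..<l}"
  shows "inj_on (wr_elt l D gs h) (Omega l D)"
proof (rule inj_onI)
  fix x x' assume x: "x \<in> Omega l D" and x': "x' \<in> Omega l D"
    and eq: "wr_elt l D gs h x = wr_elt l D gs h x'"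
  show "x = x'"
  proof (rule extensionalityI[of _ "{..<l}"])
    fix j assume "j \<in> {..<l}"
    then have j: "j < l" by simp
    have "gs j (x j) = gs j (x' j)"
      using wr_elt_apply[OF x h j, where gs = gs] wr_elt_apply[OF x' h j, where gs = gs] eq
      by simp
    moreover have "gs j \<in> Bij D" using gs j by auto
    ultimately show "x j = x' j"
      using Bij_inj_on Omega_coordinate[OF x j] Omega_coordinate[OF x' j] by (metis inj_onD)
  qed (use x x' in \<open>simp_all add: Omega_def PiE_def\<close>)
qed

lemma wr_elt_image:
  assumes gs: "gs \<in> PiE {..<l} (\<lambda>_. Bij D)" and h: "h \<in> Bij {..<l}"
  shows "wr_elt l D gs h ` Omega l D = Omega l D"
proof
  show "wr_elt l D gs h ` Omega l D \<subseteq> Omega l D"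
    using wr_elt_in_Omega[OF _ gs h] by blast
  show "Omega l D \<subseteq> wr_elt l D gs h ` Omega l D"
  proof
    fix y assume y: "y \<in> Omega l D"
    have gsj: "gs j \<in> Bij D" if "j < l" for j using gs that by auto
    have yhj: "y (h j) \<in> D" if "j < l" for j
      using Omega_coordinate[OF y] Bij_apply_closed[OF h] that by simp
    define x where "x = (\<lambda>j\<in>{..<l}. inv_into D (gs j) (y (h j)))"
    have x: "x \<in> Omega l D"
      using yhj Bij_image[OF gsj] by (simp add: x_def Omega_def inv_into_into)
    have "wr_elt l D gs h x = y"
      using yhj Bij_image[OF gsj]
      by (intro wr_elt_eqI[OF x h]) (use y in \<open>simp_all add: x_def f_inv_into_f Omega_def PiE_def\<close>)
    then show "y \<in> wr_elt l D gs h ` Omega l D" using x by blast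
  qed
qed

lemma wr_elt_extensional: "wr_elt l D gs h \<in> extensional (Omega l D)"
  by (simp add: wr_elt_def)

lemma wr_elt_Bij:
  assumes "gs \<in> PiE {..<l} (\<lambda>_. Bij D)" "h \<in> Bij {..<l}"
  shows "wr_elt l D gs h \<in> Bij (Omega l D)"
  using wr_elt_inj_on[OF assms] wr_elt_image[OF assms] wr_elt_extensional
  by (simp add: Bij_def bij_betw_def)

lemma wr_elt_mult:
  assumes gs: "gs \<in> PiE {..<l} (\<lambda>_. Bij D)" and h: "h \<in> Bij {..<l}"
    and gs': "gs' \<in> PiE {..<l} (\<lambda>_. Bij D)" and h': "h' \<in> Bij {..<l}"
  shows "wr_elt l D gs h \<otimes>\<^bsub>BijGroup (Omega l D)\<^esub> wr_elt l D gs' h'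
       = wr_elt l D (\<lambda>j\<in>{..<l}. gs (h' j) \<otimes>\<^bsub>BijGroup D\<^esub> gs' j) (h \<otimes>\<^bsub>BijGroup {..<l}\<^esub> h')"
    (is "?w \<otimes>\<^bsub>_\<^esub> ?w' = wr_elt l D ?gs ?h")
proof (rule extensionalityI[of _ "Omega l D"])
  fix x assume x: "x \<in> Omega l D"
  have x': "?w' x \<in> Omega l D" using wr_elt_in_Omega[OF x gs' h'] .
  have "wr_elt l D ?gs ?h x = ?w (?w' x)"
  proof (rule wr_elt_eqI[OF x BijGroup_mult_closed[OF h h']])
    show "?w (?w' x) \<in> extensional {..<l}"
      using wr_elt_in_Omega[OF x' gs h] by (simp add: Omega_def PiE_def)
    fix j assume j: "j < l"
    have h'j: "h' j < l" using Bij_apply_closed[OF h'] j by simp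
    have "?w (?w' x) (?h j) = gs (h' j) (gs' j (x j))"
      using BijGroup_mult_apply[OF h h'] wr_elt_apply[OF x' h h'j] wr_elt_apply[OF x h' j] j
      by simp
    also have "\<dots> = ?gs j (x j)"
      using j h'j gs gs' Omega_coordinate[OF x j] by (simp add: BijGroup_mult_apply PiE_iff)
    finally show "?w (?w' x) (?h j) = ?gs j (x j)" .
  qed
  then show "(?w \<otimes>\<^bsub>BijGroup (Omega l D)\<^esub> ?w') x = wr_elt l D ?gs ?h x"
    using BijGroup_mult_apply[OF wr_elt_Bij[OF gs h] wr_elt_Bij[OF gs' h'] x] by simp
qed (simp_all add: wr_elt_extensional Bij_imp_extensional BijGroup_mult_closed wr_elt_Bij
    gs gs' h h')

lemma wr_elt_one:
  "wr_elt l D (\<lambda>j\<in>{..<l}. \<one>\<^bsub>BijGroup D\<^esub>) \<one>\<^bsub>BijGroup {..<l}\<^esub> = \<one>\<^bsub>BijGroup (Omega l D)\<^esub>"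
proof (rule extensionalityI[of _ "Omega l D"])
  fix x assume x: "x \<in> Omega l D"
  have "wr_elt l D (\<lambda>j\<in>{..<l}. \<lambda>x\<in>D. x) (\<lambda>i\<in>{..<l}. i) x = x"
    using x by (intro wr_elt_eqI) (simp_all add: id_Bij Omega_def PiE_iff)
  then show "wr_elt l D (\<lambda>j\<in>{..<l}. \<one>\<^bsub>BijGroup D\<^esub>) \<one>\<^bsub>BijGroup {..<l}\<^esub> x = \<one>\<^bsub>BijGroup (Omega l D)\<^esub> x"
    using x by simp
qed (simp_all add: wr_elt_extensional)

lemma wr_elt_inv:
  assumes gs: "gs \<in> PiE {..<l} (\<lambda>_. Bij D)" and h: "h \<in> Bij {..<l}"
  shows "inv\<^bsub>BijGroup (Omega l D)\<^esub> (wr_elt l D gs h)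
       = wr_elt l D (\<lambda>j\<in>{..<l}. inv\<^bsub>BijGroup D\<^esub> (gs ((inv\<^bsub>BijGroup {..<l}\<^esub> h) j)))
           (inv\<^bsub>BijGroup {..<l}\<^esub> h)"
    (is "_ = wr_elt l D ?gi ?hi")
proof (rule group.inv_equality[OF group_BijGroup])
  have hi: "?hi \<in> Bij {..<l}" using BijGroup_inv_closed[OF h] .
  have hih: "?hi (h j) = j" if "j < l" for j
    using BijGroup_inv_apply[OF h] that by simp
  have gi: "?gi \<in> PiE {..<l} (\<lambda>_. Bij D)"
    using gs Bij_apply_closed[OF hi] by (simp add: PiE_iff BijGroup_inv_closed)
  have "(\<lambda>j\<in>{..<l}. ?gi (h j) \<otimes>\<^bsub>BijGroup D\<^esub> gs j) = (\<lambda>j\<in>{..<l}. \<one>\<^bsub>BijGroup D\<^esub>)"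
  proof (rule restrict_ext)
    fix j assume "j \<in> {..<l}"
    then have j: "j < l" "h j < l" using Bij_apply_closed[OF h] by auto
    have "gs j \<in> Bij D" using gs j by auto
    then show "?gi (h j) \<otimes>\<^bsub>BijGroup D\<^esub> gs j = \<one>\<^bsub>BijGroup D\<^esub>"
      using group.l_inv[OF group_BijGroup, of "gs j" D] j hih by simp
  qed
  moreover have "?hi \<otimes>\<^bsub>BijGroup {..<l}\<^esub> h = \<one>\<^bsub>BijGroup {..<l}\<^esub>"
    using group.l_inv[OF group_BijGroup, of h "{..<l}"] h by simp
  ultimately show "wr_elt l D ?gi ?hi \<otimes>\<^bsub>BijGroup (Omega l D)\<^esub> wr_elt l D gs h
      = \<one>\<^bsub>BijGroup (Omega l D)\<^esub>"
    using wr_elt_mult[OF gi hi gs h] wr_elt_one by metis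
  show "wr_elt l D gs h \<in> carrier (BijGroup (Omega l D))"
    "wr_elt l D ?gi ?hi \<in> carrier (BijGroup (Omega l D))"
    using wr_elt_Bij[OF gs h] wr_elt_Bij[OF gi hi] by simp_all
qed

lemma wr_elt_top_unique:
  assumes D: "card D \<ge> 2" and gs: "gs \<in> PiE {..<l} (\<lambda>_. Bij D)"
    and h: "h \<in> Bij {..<l}" and h': "h' \<in> Bij {..<l}"
    and eq: "wr_elt l D gs h = wr_elt l D gs' h'"
  shows "h = h'"
proof (rule extensionalityI[of _ "{..<l}"])
  obtain a B where aB: "D = insert a B" "a \<notin> B" "1 \<le> card B"
    using D card_le_Suc_iff[of 1 D] by (auto simp: numeral_2_eq_2)
  then obtain b where ab: "a \<in> D" "b \<in> D" "a \<noteq> b"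
    by (metis card.empty ex_in_conv insertCI not_one_le_zero)
  fix j assume "j \<in> {..<l}"
  then have j: "j < l" by simp
  show "h j = h' j"
  proof (rule ccontr)
    assume ne: "h j \<noteq> h' j"
    have "h j < l" using Bij_apply_closed[OF h] j by simp
    then obtain j' where j': "j' < l" "h' j' = h j"
      using Bij_lessThan_preimage[OF h'] by blast
    txt \<open>Vary coordinate \<open>j\<close> only: coordinate \<open>h j\<close> of the image then sees the change
      through \<open>gs j\<close>, but not through \<open>gs' j'\<close>.\<close>
    define x where "x c = (\<lambda>k\<in>{..<l}. if k = j then c else a)" for c
    have "gs j c = gs' j' a" if c: "c \<in> D" for c
    proof -
      have xc: "x c \<in> Omega l D" using ab c by (simp add: x_def Omega_def)
      have "gs j c = wr_elt l D gs h (x c) (h j)"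
        using wr_elt_apply[OF xc h j] j by (simp add: x_def)
      also have "\<dots> = gs' j' a"
        using wr_elt_apply[OF xc h' j'(1)] j' ne eq by (auto simp: x_def)
      finally show ?thesis .
    qed
    then have "gs j a = gs j b" using ab by simp
    moreover have "gs j \<in> Bij D" using gs j by auto
    ultimately show False using ab Bij_inj_on by (metis inj_onD)
  qed
qed (use h h' in \<open>simp_all add: Bij_imp_extensional\<close>)

lemma wr_pi_wr_elt:
  assumes "card D \<ge> 2" "gs \<in> PiE {..<l} (\<lambda>_. Bij D)" "h \<in> Bij {..<l}"
  shows "wr_pi l D (wr_elt l D gs h) = h"
  unfolding wr_pi_def
proof (rule the_equality)
  fix h' assume "h' \<in> carrier (BijGroup {..<l}) \<and>
      (\<exists>gs'\<in>{..<l} \<rightarrow>\<^sub>E carrier (BijGroup D). wr_elt l D gs h = wr_elt l D gs' h')"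
  then show "h' = h" using wr_elt_top_unique assms by (metis carrier_BijGroup)
qed (use assms in auto)

lemma wr_elt_conj_base:
  assumes kk: "kk \<in> PiE {..<l} (\<lambda>_. Bij D)" and gs: "gs \<in> PiE {..<l} (\<lambda>_. Bij D)"
    and s: "s \<in> Bij {..<l}"
  shows "wr_elt l D kk (\<lambda>i\<in>{..<l}. i) \<otimes>\<^bsub>BijGroup (Omega l D)\<^esub> wr_elt l D gs s
           \<otimes>\<^bsub>BijGroup (Omega l D)\<^esub> inv\<^bsub>BijGroup (Omega l D)\<^esub> wr_elt l D kk (\<lambda>i\<in>{..<l}. i)
       = wr_elt l D (\<lambda>j\<in>{..<l}. kk (s j) \<otimes>\<^bsub>BijGroup D\<^esub> gs j \<otimes>\<^bsub>BijGroup D\<^esub> inv\<^bsub>BijGroup D\<^esub> (kk j)) s"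
proof -
  let ?e = "\<lambda>i\<in>{..<l}. i"
  let ?g1 = "\<lambda>j\<in>{..<l}. kk (s j) \<otimes>\<^bsub>BijGroup D\<^esub> gs j"
  let ?ikk = "\<lambda>j\<in>{..<l}. inv\<^bsub>BijGroup D\<^esub> (kk j)"
  have e: "?e \<in> Bij {..<l}" by (rule id_Bij)
  have sj: "s j < l" if "j < l" for j using Bij_apply_closed[OF s] that by simp
  have kkj: "kk j \<in> Bij D" and gsj: "gs j \<in> Bij D" if "j < l" for j
    using kk gs that by auto
  have g1: "?g1 \<in> PiE {..<l} (\<lambda>_. Bij D)"
    using kkj gsj sj by (simp add: BijGroup_mult_closed)
  have ikk: "?ikk \<in> PiE {..<l} (\<lambda>_. Bij D)"
    using kkj by (simp add: BijGroup_inv_closed)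
  have inv_e: "inv\<^bsub>BijGroup {..<l}\<^esub> ?e = ?e"
    using monoid.inv_one[OF group.is_monoid[OF group_BijGroup], of "{..<l}"] by simp
  have "inv\<^bsub>BijGroup (Omega l D)\<^esub> wr_elt l D kk ?e
      = wr_elt l D (\<lambda>j\<in>{..<l}. inv\<^bsub>BijGroup D\<^esub> (kk (?e j))) ?e"
    using wr_elt_inv[OF kk e] inv_e by simp
  also have "(\<lambda>j\<in>{..<l}. inv\<^bsub>BijGroup D\<^esub> (kk (?e j))) = ?ikk"
    by (rule restrict_ext) simp
  finally have "inv\<^bsub>BijGroup (Omega l D)\<^esub> wr_elt l D kk ?e = wr_elt l D ?ikk ?e" .
  moreover have "?e \<otimes>\<^bsub>BijGroup {..<l}\<^esub> s = s" "s \<otimes>\<^bsub>BijGroup {..<l}\<^esub> ?e = s"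
    using monoid.l_one[OF group.is_monoid[OF group_BijGroup], of s "{..<l}"]
      monoid.r_one[OF group.is_monoid[OF group_BijGroup], of s "{..<l}"] s
    by simp_all
  ultimately have "wr_elt l D kk ?e \<otimes>\<^bsub>BijGroup (Omega l D)\<^esub> wr_elt l D gs s
           \<otimes>\<^bsub>BijGroup (Omega l D)\<^esub> inv\<^bsub>BijGroup (Omega l D)\<^esub> wr_elt l D kk ?e
      = wr_elt l D (\<lambda>j\<in>{..<l}. ?g1 (?e j) \<otimes>\<^bsub>BijGroup D\<^esub> ?ikk j) s"
    using wr_elt_mult[OF kk e gs s] wr_elt_mult[OF g1 s ikk e] by simp
  also have "(\<lambda>j\<in>{..<l}. ?g1 (?e j) \<otimes>\<^bsub>BijGroup D\<^esub> ?ikk j)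
      = (\<lambda>j\<in>{..<l}. kk (s j) \<otimes>\<^bsub>BijGroup D\<^esub> gs j \<otimes>\<^bsub>BijGroup D\<^esub> inv\<^bsub>BijGroup D\<^esub> (kk j))"
    by (rule restrict_ext) simp
  finally show ?thesis .
qed

lemma wreath_conj_base_power:
  assumes K: "subgroup K (BijGroup D)" and P: "P \<subseteq> Bij {..<l}"
    and g: "g \<in> wreath l D K P" and h: "h \<in> base_power l D K"
  shows "h \<otimes>\<^bsub>BijGroup (Omega l D)\<^esub> g \<otimes>\<^bsub>BijGroup (Omega l D)\<^esub> inv\<^bsub>BijGroup (Omega l D)\<^esub> h
    \<in> wreath l D K P"
proof -
  obtain gs s where gs: "gs \<in> PiE {..<l} (\<lambda>_. K)" and s: "s \<in> P" and g_eq: "g = wr_elt l D gs s"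
    using g by (auto simp: wreath_def)
  obtain kk where kk: "kk \<in> PiE {..<l} (\<lambda>_. K)" and h_eq: "h = wr_elt l D kk (\<lambda>i\<in>{..<l}. i)"
    using h by (auto simp: base_power_def)
  have KB: "PiE {..<l} (\<lambda>_. K) \<subseteq> PiE {..<l} (\<lambda>_. Bij D)"
    using subgroup.subset[OF K] by (simp add: PiE_mono)
  have "(\<lambda>j\<in>{..<l}. kk (s j) \<otimes>\<^bsub>BijGroup D\<^esub> gs j \<otimes>\<^bsub>BijGroup D\<^esub> inv\<^bsub>BijGroup D\<^esub> (kk j))
      \<in> PiE {..<l} (\<lambda>_. K)"
    using kk gs Bij_apply_closed[OF subsetD[OF P s]]
    by (auto intro!: subgroup.m_closed[OF K] subgroup.m_inv_closed[OF K])
  then show ?thesis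
    using wr_elt_conj_base[OF subsetD[OF KB kk] subsetD[OF KB gs] subsetD[OF P s]] s
    unfolding g_eq h_eq wreath_def by blast
qed

lemma base_power_mono: "K \<subseteq> K' \<Longrightarrow> base_power l D K \<subseteq> base_power l D K'"
  by (auto simp: base_power_def PiE_iff)

lemma base_power_aligning_point:
  assumes K: "K \<subseteq> Bij D" and a: "a \<in> D" and x: "x \<in> Omega l D"
    and ex: "\<forall>i<l. \<exists>k\<in>K. k a = a \<and> k (x i) = x 0"
  obtains h where "h \<in> base_power l D {k \<in> K. k a = a}" "h \<in> Bij (Omega l D)"
    "h (\<lambda>i\<in>{..<l}. a) = (\<lambda>i\<in>{..<l}. a)" "h x = (\<lambda>i\<in>{..<l}. x 0)"
proof -
  obtain kk where kk: "\<And>i. i < l \<Longrightarrow> kk i \<in> K \<and> kk i a = a \<and> kk i (x i) = x 0"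
    using ex by metis
  define h where "h = wr_elt l D (restrict kk {..<l}) (\<lambda>i\<in>{..<l}. i)"
  have "restrict kk {..<l} \<in> PiE {..<l} (\<lambda>_. {k \<in> K. k a = a})"
    using kk by simp
  then have "h \<in> base_power l D {k \<in> K. k a = a}"
    unfolding h_def base_power_def by blast
  moreover have "restrict kk {..<l} \<in> PiE {..<l} (\<lambda>_. Bij D)"
    using kk K by auto
  then have "h \<in> Bij (Omega l D)"
    unfolding h_def using wr_elt_Bij id_Bij by blast
  moreover have "(\<lambda>i\<in>{..<l}. a) \<in> Omega l D"
    using a by (simp add: Omega_def)
  then have "h (\<lambda>i\<in>{..<l}. a) = (\<lambda>i\<in>{..<l}. a)" "h x = (\<lambda>i\<in>{..<l}. x 0)"
    unfolding h_def using kk x by (auto intro!: wr_elt_eqI id_Bij)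
  ultimately show ?thesis using that by blast
qed

section \<open>Image graphs\<close>

lemma image_graph_iff:
  assumes E: "graph_on V E" and h: "h \<in> Bij V" and x: "x \<in> V" and y: "y \<in> V"
  shows "image_graph h E x y \<longleftrightarrow> E ((inv\<^bsub>BijGroup V\<^esub> h) x) ((inv\<^bsub>BijGroup V\<^esub> h) y)"
proof
  assume "image_graph h E x y"
  then obtain u v where "E u v" "x = h u" "y = h v" by (auto simp: image_graph_def)
  moreover have "u \<in> V" "v \<in> V" using E \<open>E u v\<close> by (auto simp: graph_on_def)
  ultimately show "E ((inv\<^bsub>BijGroup V\<^esub> h) x) ((inv\<^bsub>BijGroup V\<^esub> h) y)"
    using BijGroup_inv_apply[OF h] by simp
next
  assume "E ((inv\<^bsub>BijGroup V\<^esub> h) x) ((inv\<^bsub>BijGroup V\<^esub> h) y)"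
  then show "image_graph h E x y"
    unfolding image_graph_def using BijGroup_apply_inv[OF h] x y by metis
qed

lemma conj_set_subset_graph_aut:
  assumes E: "graph_on V E" and h: "h \<in> Bij V" and G: "G \<subseteq> graph_aut V E"
  shows "conj_set (BijGroup V) G h \<subseteq> graph_aut V (image_graph h E)"
proof
  let ?ih = "inv\<^bsub>BijGroup V\<^esub> h"
  fix c assume "c \<in> conj_set (BijGroup V) G h"
  then obtain g where g: "g \<in> G" and c: "c = h \<otimes>\<^bsub>BijGroup V\<^esub> g \<otimes>\<^bsub>BijGroup V\<^esub> ?ih"
    by (auto simp: conj_set_def)
  have gB: "g \<in> Bij V" and g_aut: "\<forall>x\<in>V. \<forall>y\<in>V. E x y \<longleftrightarrow> E (g x) (g y)"
    using G g by (auto simp: graph_aut_def)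
  have ih: "?ih \<in> Bij V" using BijGroup_inv_closed[OF h] .
  have cB: "c \<in> Bij V" using c h gB ih by (simp add: BijGroup_mult_closed)
  have ih_c: "?ih (c x) = g (?ih x)" if x: "x \<in> V" for x
  proof -
    have "c x = h (g (?ih x))"
      using c BijGroup_mult_apply BijGroup_mult_closed h gB ih x Bij_apply_closed by metis
    then show ?thesis
      using BijGroup_inv_apply[OF h] Bij_apply_closed[OF gB] Bij_apply_closed[OF ih x] by simp
  qed
  show "c \<in> graph_aut V (image_graph h E)"
    unfolding graph_aut_def
  proof (intro CollectI conjI ballI)
    show "c \<in> carrier (BijGroup V)" using cB by simp
    fix x y assume x: "x \<in> V" and y: "y \<in> V"
    have "image_graph h E (c x) (c y) \<longleftrightarrow> E (?ih (c x)) (?ih (c y))"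
      using image_graph_iff[OF E h] Bij_apply_closed[OF cB] x y by simp
    also have "\<dots> \<longleftrightarrow> E (?ih x) (?ih y)"
      using ih_c x y g_aut Bij_apply_closed[OF ih] by simp
    also have "\<dots> \<longleftrightarrow> image_graph h E x y"
      using image_graph_iff[OF E h x y] by simp
    finally show "image_graph h E x y \<longleftrightarrow> image_graph h E (c x) (c y)" by simp
  qed
qed

section \<open>Subgroups of the wreath product\<close>

lemma componentI:
  "gs \<in> PiE {..<l} (\<lambda>_. Bij D) \<Longrightarrow> h \<in> Bij {..<l} \<Longrightarrow> h j = j \<Longrightarrow> wr_elt l D gs h \<in> G
    \<Longrightarrow> gs j \<in> component l D G j"
  by (auto simp: component_def)

lemma componentE:
  assumes "k \<in> component l D G j"
  obtains gs h where "gs \<in> PiE {..<l} (\<lambda>_. Bij D)" "h \<in> Bij {..<l}" "h j = j"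
    "wr_elt l D gs h \<in> G" "k = gs j"
  using assms by (auto simp: component_def)

locale wreath_subgroup =
  fixes l :: nat and D :: "'a set" and G :: "((nat \<Rightarrow> 'a) \<Rightarrow> (nat \<Rightarrow> 'a)) set"
  assumes two_le_card: "card D \<ge> 2"
    and subgroup_G: "subgroup G (BijGroup (Omega l D))"
    and G_subset_Wr: "G \<subseteq> Wr l D"
begin

lemma G_decompose:
  assumes "g \<in> G"
  obtains gs h where "gs \<in> PiE {..<l} (\<lambda>_. Bij D)" "h \<in> Bij {..<l}" "g = wr_elt l D gs h"
  using G_subset_Wr assms by (auto simp: Wr_def)

lemma G_Bij: "g \<in> G \<Longrightarrow> g \<in> Bij (Omega l D)"
  using subgroup.subset[OF subgroup_G] by auto

lemma wr_pi_closed: "g \<in> G \<Longrightarrow> wr_pi l D g \<in> Bij {..<l}"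
  by (metis G_decompose two_le_card wr_pi_wr_elt)

lemma one_in_component:
  assumes j: "j < l"
  shows "\<one>\<^bsub>BijGroup D\<^esub> \<in> component l D G j"
proof -
  have "(\<lambda>j\<in>{..<l}. \<one>\<^bsub>BijGroup D\<^esub>) \<in> PiE {..<l} (\<lambda>_. Bij D)"
    by (simp add: id_Bij)
  moreover have "\<one>\<^bsub>BijGroup {..<l}\<^esub> \<in> Bij {..<l}" "\<one>\<^bsub>BijGroup {..<l}\<^esub> j = j"
    using j by (simp_all add: id_Bij)
  moreover have "wr_elt l D (\<lambda>j\<in>{..<l}. \<one>\<^bsub>BijGroup D\<^esub>) \<one>\<^bsub>BijGroup {..<l}\<^esub> \<in> G"
    using wr_elt_one subgroup.one_closed[OF subgroup_G] by metis
  ultimately have "(\<lambda>j\<in>{..<l}. \<one>\<^bsub>BijGroup D\<^esub>) j \<in> component l D G j"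
    by (rule componentI)
  then show ?thesis using j by simp
qed

lemma component_inv_closed:
  assumes j: "j < l" and k: "k \<in> component l D G j"
  shows "inv\<^bsub>BijGroup D\<^esub> k \<in> component l D G j"
proof -
  obtain gs h where gs: "gs \<in> PiE {..<l} (\<lambda>_. Bij D)" and h: "h \<in> Bij {..<l}"
    and hj: "h j = j" and G: "wr_elt l D gs h \<in> G" and k: "k = gs j"
    using k by (rule componentE)
  let ?hi = "inv\<^bsub>BijGroup {..<l}\<^esub> h"
  let ?gi = "\<lambda>j\<in>{..<l}. inv\<^bsub>BijGroup D\<^esub> (gs (?hi j))"
  have hi: "?hi \<in> Bij {..<l}" and hij: "?hi j = j"
    using BijGroup_inv_closed[OF h] BijGroup_inv_apply[OF h, of j] hj j by auto
  have "?gi \<in> PiE {..<l} (\<lambda>_. Bij D)"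
    using gs Bij_apply_closed[OF hi] by (simp add: PiE_iff BijGroup_inv_closed)
  moreover have "wr_elt l D ?gi ?hi \<in> G"
    using wr_elt_inv[OF gs h] subgroup.m_inv_closed[OF subgroup_G G] by simp
  ultimately have "?gi j \<in> component l D G j"
    using hi hij by (intro componentI)
  then show ?thesis using j hij k by simp
qed

lemma component_mult_closed:
  assumes j: "j < l" and k: "k \<in> component l D G j" and k': "k' \<in> component l D G j"
  shows "k \<otimes>\<^bsub>BijGroup D\<^esub> k' \<in> component l D G j"
proof -
  obtain gs h where gs: "gs \<in> PiE {..<l} (\<lambda>_. Bij D)" and h: "h \<in> Bij {..<l}"
    and hj: "h j = j" and G: "wr_elt l D gs h \<in> G" and k: "k = gs j"
    using k by (rule componentE)
  obtain gs' h' where gs': "gs' \<in> PiE {..<l} (\<lambda>_. Bij D)" and h': "h' \<in> Bij {..<l}"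
    and hj': "h' j = j" and G': "wr_elt l D gs' h' \<in> G" and k': "k' = gs' j"
    using k' by (rule componentE)
  let ?h = "h \<otimes>\<^bsub>BijGroup {..<l}\<^esub> h'"
  let ?gs = "\<lambda>i\<in>{..<l}. gs (h' i) \<otimes>\<^bsub>BijGroup D\<^esub> gs' i"
  have "?gs \<in> PiE {..<l} (\<lambda>_. Bij D)"
    using gs gs' Bij_apply_closed[OF h'] by (simp add: PiE_iff BijGroup_mult_closed)
  moreover have "?h \<in> Bij {..<l}" "?h j = j"
    using BijGroup_mult_closed[OF h h'] BijGroup_mult_apply[OF h h', of j] hj hj' j by auto
  moreover have "wr_elt l D ?gs ?h \<in> G"
    using wr_elt_mult[OF gs h gs' h'] subgroup.m_closed[OF subgroup_G G G'] by simp
  ultimately have "?gs j \<in> component l D G j"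
    by (rule componentI)
  then show ?thesis using j hj' k k' by simp
qed

lemma component_subgroup:
  assumes j: "j < l"
  shows "subgroup (component l D G j) (BijGroup D)"
proof (rule group.subgroupI[OF group_BijGroup])
  show "component l D G j \<subseteq> carrier (BijGroup D)"
    using j by (auto elim!: componentE)
  show "component l D G j \<noteq> {}"
    using one_in_component[OF j] by blast
qed (use j component_inv_closed component_mult_closed in auto)

lemma wr_pi_mult:
  assumes g: "g \<in> G" and g': "g' \<in> G"
  shows "wr_pi l D (g \<otimes>\<^bsub>BijGroup (Omega l D)\<^esub> g')
       = wr_pi l D g \<otimes>\<^bsub>BijGroup {..<l}\<^esub> wr_pi l D g'"
proof -
  obtain gs h where gs: "gs \<in> PiE {..<l} (\<lambda>_. Bij D)" and h: "h \<in> Bij {..<l}"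
    and g_eq: "g = wr_elt l D gs h"
    using G_decompose[OF g] .
  obtain gs' h' where gs': "gs' \<in> PiE {..<l} (\<lambda>_. Bij D)" and h': "h' \<in> Bij {..<l}"
    and g'_eq: "g' = wr_elt l D gs' h'"
    using G_decompose[OF g'] .
  let ?gs = "\<lambda>j\<in>{..<l}. gs (h' j) \<otimes>\<^bsub>BijGroup D\<^esub> gs' j"
  have "?gs \<in> PiE {..<l} (\<lambda>_. Bij D)"
    using gs gs' Bij_apply_closed[OF h'] by (simp add: PiE_iff BijGroup_mult_closed)
  then have "wr_pi l D (wr_elt l D ?gs (h \<otimes>\<^bsub>BijGroup {..<l}\<^esub> h'))
      = h \<otimes>\<^bsub>BijGroup {..<l}\<^esub> h'"
    using wr_pi_wr_elt[OF two_le_card _ BijGroup_mult_closed[OF h h']] by blast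
  moreover have "wr_pi l D g = h" "wr_pi l D g' = h'"
    using wr_pi_wr_elt[OF two_le_card gs h] wr_pi_wr_elt[OF two_le_card gs' h'] g_eq g'_eq
    by simp_all
  ultimately show ?thesis
    using wr_elt_mult[OF gs h gs' h'] g_eq g'_eq by simp
qed

lemma wr_pi_hom: "group_hom (subgrp (BijGroup (Omega l D)) G) (BijGroup {..<l}) (wr_pi l D)"
proof (intro group_hom.intro group_hom_axioms.intro)
  show "group (subgrp (BijGroup (Omega l D)) G)"
    by (rule group.subgroup_imp_group[OF group_BijGroup subgroup_G])
  show "wr_pi l D \<in> hom (subgrp (BijGroup (Omega l D)) G) (BijGroup {..<l})"
    by (rule homI) (simp_all add: wr_pi_closed wr_pi_mult)
qed (rule group_BijGroup)

lemma minimal_normal_transitive_subset_kernel: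
  assumes l: "0 < l"
    and M_min: "minimal_normal (subgrp (BijGroup (Omega l D)) G) M"
    and M_trans: "\<forall>x\<in>Omega l D. \<forall>y\<in>Omega l D. \<exists>m\<in>M. m x = y"
  shows "M \<subseteq> kernel (subgrp (BijGroup (Omega l D)) G) (BijGroup {..<l}) (wr_pi l D)"
    (is "M \<subseteq> ?B")
proof (rule ccontr)
  let ?G = "subgrp (BijGroup (Omega l D)) G"
  interpret pi: group_hom ?G "BijGroup {..<l}" "wr_pi l D" by (rule wr_pi_hom)
  assume not_sub: "\<not> M \<subseteq> ?B"
  have M_normal: "M \<lhd> ?G" using M_min by (simp add: minimal_normal_def)
  have M_sub: "subgroup M ?G" using normal_imp_subgroup[OF M_normal] .
  have MG: "M \<subseteq> G" using subgroup.subset[OF M_sub] by simp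
  have "M \<inter> ?B \<lhd> ?G"
    using group.normal_subgroup_intersect[OF group.subgroup_imp_group[OF group_BijGroup subgroup_G]
        M_normal pi.normal_kernel] .
  then have "M \<inter> ?B = {\<one>\<^bsub>?G\<^esub>} \<or> M \<inter> ?B = M"
    using M_min unfolding minimal_normal_def by blast
  then have "M \<inter> ?B = {\<one>\<^bsub>?G\<^esub>}"
    using not_sub by blast
  moreover have "kernel (?G\<lparr>carrier := M\<rparr>) (BijGroup {..<l}) (wr_pi l D) = M \<inter> ?B"
    unfolding kernel_def using MG by auto
  ultimately have "inj_on (wr_pi l D) M"
    using pi.inj_on_subgroup_iff_trivial_ker[OF M_sub] by simp
  then have M_dvd: "card M dvd fact l"
    using card_dvd_fact_of_inj_on_hom[OF wr_pi_hom M_sub] by simp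
  obtain a where "a \<in> D"
    using two_le_card by (metis card.empty ex_in_conv not_numeral_le_zero)
  then have "(\<lambda>i\<in>{..<l}. a) \<in> Omega l D" by (simp add: Omega_def)
  moreover have "subgroup M (BijGroup (Omega l D))"
    using group.incl_subgroup[OF group_BijGroup subgroup_G M_sub] .
  ultimately have "card (Omega l D) dvd card M"
    using M_trans by (intro transitive_subgroup_card_dvd) auto
  then have "card D ^ l dvd fact l"
    using dvd_trans[OF _ M_dvd] by (simp add: card_Omega)
  then show False
    using power_not_dvd_fact[OF two_le_card] l by simp
qed

lemma exists_stabiliser_with_same_top:
  assumes M_ker: "M \<subseteq> kernel (subgrp (BijGroup (Omega l D)) G) (BijGroup {..<l}) (wr_pi l D)"
    and M_trans: "\<forall>x\<in>Omega l D. \<forall>y\<in>Omega l D. \<exists>m\<in>M. m x = y"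
    and x: "x \<in> Omega l D" and g: "g \<in> G"
  obtains g' where "g' \<in> G" "g' x = x" "wr_pi l D g' = wr_pi l D g"
proof -
  have gx: "g x \<in> Omega l D" using Bij_apply_closed[OF G_Bij[OF g] x] .
  then obtain m where m: "m \<in> M" "m (g x) = x" using M_trans x by blast
  then have mG: "m \<in> G" and m_top: "wr_pi l D m = \<one>\<^bsub>BijGroup {..<l}\<^esub>"
    using M_ker by (auto simp: kernel_def)
  have "m \<otimes>\<^bsub>BijGroup (Omega l D)\<^esub> g \<in> G"
    using subgroup.m_closed[OF subgroup_G mG g] .
  moreover have "(m \<otimes>\<^bsub>BijGroup (Omega l D)\<^esub> g) x = x"
    using BijGroup_mult_apply[OF G_Bij[OF mG] G_Bij[OF g] x] m(2) by simp
  moreover have "wr_pi l D (m \<otimes>\<^bsub>BijGroup (Omega l D)\<^esub> g) = wr_pi l D g"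
    using wr_pi_mult[OF mG g] m_top
      monoid.l_one[OF group.is_monoid[OF group_BijGroup], of "wr_pi l D g" "{..<l}"]
      wr_pi_closed[OF g]
    by simp
  ultimately show ?thesis using that by blast
qed

lemma wreath_elt_wr_pi:
  assumes g: "g \<in> wreath l D K (wr_pi l D ` G)" and K: "K \<subseteq> Bij D"
  obtains gs where "gs \<in> PiE {..<l} (\<lambda>_. K)" "g = wr_elt l D gs (wr_pi l D g)"
proof -
  obtain gs s where gs: "gs \<in> PiE {..<l} (\<lambda>_. K)" and s: "s \<in> wr_pi l D ` G"
    and g_eq: "g = wr_elt l D gs s"
    using g by (auto simp: wreath_def)
  have "gs \<in> PiE {..<l} (\<lambda>_. Bij D)" using gs K by (auto simp: PiE_iff)
  moreover have "s \<in> Bij {..<l}" using s wr_pi_closed by blast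
  ultimately have "wr_pi l D g = s" using wr_pi_wr_elt[OF two_le_card] g_eq by simp
  then show ?thesis using that gs g_eq by simp
qed

lemma component_stabiliser_moves_coordinate:
  assumes l: "0 < l" and i: "i < l"
    and M_ker: "M \<subseteq> kernel (subgrp (BijGroup (Omega l D)) G) (BijGroup {..<l}) (wr_pi l D)"
    and M_trans: "\<forall>x\<in>Omega l D. \<forall>y\<in>Omega l D. \<exists>m\<in>M. m x = y"
    and aut: "G \<subseteq> graph_aut (Omega l D) E" and arc: "arc_transitive E M"
    and top_trans: "\<forall>i<l. \<forall>j<l. \<exists>h\<in>wr_pi l D ` G. h i = j"
    and in_wreath: "G \<subseteq> wreath l D (component l D G 0) (wr_pi l D ` G)"
    and a1: "a1 \<in> D" and \<beta>: "\<beta> \<in> Omega l D" "E (\<lambda>i\<in>{..<l}. a1) \<beta>"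
  shows "\<exists>k \<in> component l D G 0. k a1 = a1 \<and> k (\<beta> i) = \<beta> 0"
proof -
  let ?K = "component l D G 0" and ?\<alpha> = "\<lambda>i\<in>{..<l}. a1"
  have \<alpha>: "?\<alpha> \<in> Omega l D" using a1 by (simp add: Omega_def)
  have K: "subgroup ?K (BijGroup D)" using component_subgroup[OF l] .
  have KB: "?K \<subseteq> Bij D" using subgroup.subset[OF K] by simp
  obtain g0 where g0: "g0 \<in> G" "wr_pi l D g0 i = 0"
    using top_trans[rule_format, OF i l] by blast
  obtain g where g: "g \<in> G" "g ?\<alpha> = ?\<alpha>" and gi: "wr_pi l D g i = 0"
  proof (rule exists_stabiliser_with_same_top[OF M_ker M_trans \<alpha> g0(1)])
    fix g assume "g \<in> G" "g ?\<alpha> = ?\<alpha>" "wr_pi l D g = wr_pi l D g0"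
    then show thesis using that g0(2) by simp
  qed
  obtain gs where gs: "gs \<in> PiE {..<l} (\<lambda>_. ?K)" "g = wr_elt l D gs (wr_pi l D g)"
    using wreath_elt_wr_pi[OF subsetD[OF in_wreath g(1)] KB] by blast
  have g_apply: "g x 0 = gs i (x i)" if "x \<in> Omega l D" for x
    using wr_elt_apply[OF that wr_pi_closed[OF g(1)] i, of gs] gs(2) gi by simp
  have gs_fix: "gs i a1 = a1"
    using g_apply[OF \<alpha>] g(2) l i by simp
  have "E ?\<alpha> (g \<beta>)"
    using aut g \<alpha> \<beta> by (auto simp: graph_aut_def)
  then obtain m where m: "m \<in> M" "m ?\<alpha> = ?\<alpha>" "m \<beta> = g \<beta>"
    using arc \<beta>(2) unfolding arc_transitive_def by blast
  have mG: "m \<in> G" and m_top: "wr_pi l D m = (\<lambda>i\<in>{..<l}. i)"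
    using M_ker m(1) by (auto simp: kernel_def)
  obtain ms where ms: "ms \<in> PiE {..<l} (\<lambda>_. ?K)" "m = wr_elt l D ms (\<lambda>i\<in>{..<l}. i)"
    using wreath_elt_wr_pi[OF subsetD[OF in_wreath mG] KB] m_top by auto
  have m_apply: "m x 0 = ms 0 (x 0)" if "x \<in> Omega l D" for x
    using wr_elt_apply[OF that id_Bij l, of ms] ms(2) l by simp
  have ms_fix: "ms 0 a1 = a1"
    using m_apply[OF \<alpha>] m(2) l by simp
  have ms_\<beta>: "ms 0 (\<beta> 0) = gs i (\<beta> i)"
    using m_apply[OF \<beta>(1)] g_apply[OF \<beta>(1)] m(3) by simp
  have "ms 0 \<in> ?K" "gs i \<in> ?K"
    using PiE_mem[OF ms(1), of 0] PiE_mem[OF gs(1), of i] l i by simp_all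
  from subgroup_stabiliser_transfer[OF K this a1 ms_fix gs_fix Omega_coordinate[OF \<beta>(1) l]
      Omega_coordinate[OF \<beta>(1) i] ms_\<beta>]
  show ?thesis .
qed

end

theorem lemma3p3:
  fixes D :: "'a set" and l :: nat
    and G M :: "((nat \<Rightarrow> 'a) \<Rightarrow> (nat \<Rightarrow> 'a)) set"
    and E :: "(nat \<Rightarrow> 'a) \<Rightarrow> (nat \<Rightarrow> 'a) \<Rightarrow> bool"
    and a1 :: 'a and \<beta> :: "nat \<Rightarrow> 'a"
  assumes D: "finite D" "card D \<ge> 2"
    and l: "l \<ge> 2"
    and G_sub: "subgroup G (BijGroup (Omega l D))" "G \<subseteq> Wr l D"
    and M_min: "minimal_normal (subgrp (BijGroup (Omega l D)) G) M"
    and M_trans: "\<forall>x\<in>Omega l D. \<forall>y\<in>Omega l D. \<exists>m\<in>M. m x = y"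
    and M_prod: "\<exists>k Ts. k \<ge> 1 \<and> internal_direct_product (BijGroup (Omega l D)) M k Ts
        \<and> (\<forall>i<k. simple_group (subgrp (BijGroup (Omega l D)) (Ts i))
               \<and> finite (Ts i)
               \<and> subgrp (BijGroup (Omega l D)) (Ts i) \<cong> subgrp (BijGroup (Omega l D)) (Ts 0))"
    and graph: "graph_on (Omega l D) E" "connected_graph (Omega l D) E"
    and aut: "G \<subseteq> graph_aut (Omega l D) E"
    and arc: "arc_transitive E M"
    and top_trans: "\<forall>i<l. \<forall>j<l. \<exists>h\<in>wr_pi l D ` G. h i = j"
    and in_wreath: "G \<subseteq> wreath l D (component l D G 0) (wr_pi l D ` G)"
    and a1: "a1 \<in> D"
    and \<beta>: "E (\<lambda>i\<in>{..<l}. a1) \<beta>"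
  shows "\<exists>h \<in> base_power l D {k \<in> component l D G 0. k a1 = a1}.
           h \<beta> = (\<lambda>i\<in>{..<l}. \<beta> 0)
         \<and> image_graph h E (\<lambda>i\<in>{..<l}. a1) (\<lambda>i\<in>{..<l}. \<beta> 0)
         \<and> conj_set (BijGroup (Omega l D)) G h \<subseteq> graph_aut (Omega l D) (image_graph h E)
         \<and> conj_set (BijGroup (Omega l D)) G h
             \<subseteq> wreath l D (component l D G 0) (wr_pi l D ` G)"
proof -
  interpret wreath_subgroup l D G
    by (rule wreath_subgroup.intro[OF D(2) G_sub])
  let ?K = "component l D G 0" and ?\<alpha> = "\<lambda>i\<in>{..<l}. a1"
  have l0: "0 < l" using l by simp
  have K: "subgroup ?K (BijGroup D)" using component_subgroup[OF l0] .
  have KB: "?K \<subseteq> Bij D" using subgroup.subset[OF K] by simp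
  have \<beta>_Omega: "\<beta> \<in> Omega l D" using graph(1) \<beta> by (auto simp: graph_on_def)
  have M_ker: "M \<subseteq> kernel (subgrp (BijGroup (Omega l D)) G) (BijGroup {..<l}) (wr_pi l D)"
    using minimal_normal_transitive_subset_kernel[OF l0 M_min M_trans] .
  have "\<forall>i<l. \<exists>k\<in>?K. k a1 = a1 \<and> k (\<beta> i) = \<beta> 0"
    using component_stabiliser_moves_coordinate[OF l0 _ M_ker M_trans aut arc top_trans in_wreath
        a1 \<beta>_Omega \<beta>] by blast
  then obtain h where h: "h \<in> base_power l D {k \<in> ?K. k a1 = a1}" "h \<in> Bij (Omega l D)"
    "h ?\<alpha> = ?\<alpha>" "h \<beta> = (\<lambda>i\<in>{..<l}. \<beta> 0)"
    by (rule base_power_aligning_point[OF KB a1 \<beta>_Omega])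
  have "image_graph h E ?\<alpha> (\<lambda>i\<in>{..<l}. \<beta> 0)"
    unfolding image_graph_def using \<beta> h(3,4) by metis
  moreover have "conj_set (BijGroup (Omega l D)) G h \<subseteq> graph_aut (Omega l D) (image_graph h E)"
    using conj_set_subset_graph_aut[OF graph(1) h(2) aut] .
  moreover have "h \<in> base_power l D ?K"
    using base_power_mono[of "{k \<in> ?K. k a1 = a1}" ?K] h(1) by blast
  then have "conj_set (BijGroup (Omega l D)) G h \<subseteq> wreath l D ?K (wr_pi l D ` G)"
    using wreath_conj_base_power[OF K _ subsetD[OF in_wreath]] wr_pi_closed
    by (auto simp: conj_set_def)
  ultimately show ?thesis
    using h(1,4) by blast
qed

end
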